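(* Let $\mathcal{B}$ be a Boolean control network with state set $\mathcal{S}$. For any two nonempty sets of states $\mathsf{S}^1,\mathsf{S}^2\subseteq\mathcal{S}$, if $\mathsf{S}^1\subseteq\mathsf{S}^2$ and $\Gamma(\mathsf{S}^2)\ne\infty$, then $\Gamma(\mathsf{S}^1)\ne\infty$.
   Context: $\mathbb{B}=\{0,1\}$. A BCN has inputs $\mathcal{I}=\mathbb{B}^\ell$, states $\mathcal{S}=\mathbb{B}^m$, outputs $\mathcal{O}=\mathbb{B}^n$ and updating rules $\sigma:\mathcal{I}\times\mathcal{S}\to\mathcal{S}$, $\rho:\mathcal{S}\to\mathcal{O}$, with $\mathsf{s}(t+1)=\sigma(\mathsf{i}(t),\mathsf{s}(t))$, $\mathsf{o}(t)=\rho(\mathsf{s}(t))$. With $\varepsilon$ denoting empty input/output, let $\xi(\mathsf{i},\mathsf{s})=\sigma(\mathsf{i},\mathsf{s})$ for $\mathsf{i}\ne\varepsilon$, $\xi(\varepsilon,\mathsf{s})=\mathsf{s}$; for $\mathsf{S}\subseteq\mathcal{S}$, $\zeta(\mathsf{S},\mathsf{i},\mathsf{o})=\{\xi(\mathsf{i},\mathsf{s}):\mathsf{s}\in\mathsf{S},\rho(\xi(\mathsf{i},\mathsf{s}))=\mathsf{o}\}$ if $\mathsf{o}\ne\varepsilon$ and $\zeta(\mathsf{S},\mathsf{i},\varepsilon)=\{\xi(\mathsf{i},\mathsf{s}):\mathsf{s}\in\mathsf{S}\}$. For nonempty $\mathsf{S}$: $P_0(\mathsf{S})$ iff $|\mathsf{S}|=1$;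 $P_{n+1}(\mathsf{S})$ iff $|\mathsf{S}|=1$ or there is $\mathsf{i}\in\mathcal{I}$ with $|\zeta(\mathsf{S},\mathsf{i},\varepsilon)|=|\mathsf{S}|$ such that every nonempty $\zeta(\mathsf{S},\mathsf{i},\mathsf{o})$, $\mathsf{o}\in\mathcal{O}$, satisfies $P_n$. $\Gamma(\mathsf{S})\in\mathbb{N}\cup\{\infty\}$ is the least $n$ with $P_n(\mathsf{S})$, or $\infty$ if none (i.e. $\Gamma(\mathsf{S})=0$ if $|\mathsf{S}|=1$, and otherwise $\Gamma(\mathsf{S})=1+\min_{\mathsf{i}}\max_{\mathsf{o}}\Gamma(\zeta(\mathsf{S},\mathsf{i},\mathsf{o}))$ over inputs with $|\zeta(\mathsf{S},\mathsf{i},\varepsilon)|=|\mathsf{S}|$ and outputs with $\zeta(\mathsf{S},\mathsf{i},\mathsf{o})\ne\emptyset$). *)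

theory Defs
  imports Main "HOL-Library.Extended_Nat"
begin

text \<open>Boolean vectors of length k are bool lists of length k. The empty
input/output epsilon is modelled by None, a genuine input/output i by Some i.\<close>

definition bvecs :: "nat \<Rightarrow> bool list set" where
  "bvecs k = {v. length v = k}"

definition bcn :: "nat \<Rightarrow> nat \<Rightarrow> nat \<Rightarrow> (bool list \<Rightarrow> bool list \<Rightarrow> bool list)
   \<Rightarrow> (bool list \<Rightarrow> bool list) \<Rightarrow> bool" where
  "bcn l m n \<sigma> \<rho> \<longleftrightarrow>
     (\<forall>i\<in>bvecs l. \<forall>s\<in>bvecs m. \<sigma> i s \<in> bvecs m) \<and> (\<forall>s\<in>bvecs m. \<rho> s \<in> bvecs n)"

definition xi :: "(bool list \<Rightarrow> bool list \<Rightarrow> bool list) \<Rightarrow> bool list option \<Rightarrow> bool list \<Rightarrow> bool list" where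
  "xi \<sigma> i s = (case i of None \<Rightarrow> s | Some j \<Rightarrow> \<sigma> j s)"

definition zeta :: "(bool list \<Rightarrow> bool list \<Rightarrow> bool list) \<Rightarrow> (bool list \<Rightarrow> bool list)
   \<Rightarrow> bool list set \<Rightarrow> bool list option \<Rightarrow> bool list option \<Rightarrow> bool list set" where
  "zeta \<sigma> \<rho> S i out = (case out of
      None \<Rightarrow> {xi \<sigma> i s | s. s \<in> S}
    | Some p \<Rightarrow> {xi \<sigma> i s | s. s \<in> S \<and> \<rho> (xi \<sigma> i s) = p})"

fun P :: "nat \<Rightarrow> nat \<Rightarrow> (bool list \<Rightarrow> bool list \<Rightarrow> bool list) \<Rightarrow> (bool list \<Rightarrow> bool list)
   \<Rightarrow> nat \<Rightarrow> bool list set \<Rightarrow> bool" where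
  "P l n \<sigma> \<rho> 0 S = (card S = 1)"
| "P l n \<sigma> \<rho> (Suc k) S = (card S = 1 \<or>
     (\<exists>i\<in>bvecs l. card (zeta \<sigma> \<rho> S (Some i) None) = card S \<and>
        (\<forall>p\<in>bvecs n. zeta \<sigma> \<rho> S (Some i) (Some p) \<noteq> {} \<longrightarrow>
           P l n \<sigma> \<rho> k (zeta \<sigma> \<rho> S (Some i) (Some p)))))"

definition Gamma :: "nat \<Rightarrow> nat \<Rightarrow> (bool list \<Rightarrow> bool list \<Rightarrow> bool list) \<Rightarrow> (bool list \<Rightarrow> bool list)
   \<Rightarrow> bool list set \<Rightarrow> enat" where
  "Gamma l n \<sigma> \<rho> S = (if \<exists>k. P l n \<sigma> \<rho> k S then enat (LEAST k. P l n \<sigma> \<rho> k S) else \<infinity>)"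

end

theory Submission
  imports Defs
begin

text \<open>Property P is antitone in the set of states: an input that is injective on
  a set is injective on every nonempty subset, and each output class of the subset
  lies inside the corresponding output class of the larger set, so the witnessing
  input strategy for the larger set works for the smaller one as well.\<close>

lemma finite_bvecs: "finite (bvecs k)"
proof -
  have "bvecs k = {xs. set xs \<subseteq> (UNIV :: bool set) \<and> length xs = k}"
    by (auto simp: bvecs_def)
  then show ?thesis
    using finite_lists_length_eq[of "UNIV :: bool set" k] by simp
qed

lemma zeta_Some_None: "zeta \<sigma> \<rho> S (Some i) None = \<sigma> i ` S"
  by (auto simp: zeta_def xi_def)

lemma zeta_Some_Some: "zeta \<sigma> \<rho> S (Some i) (Some p) = {x \<in> \<sigma> i ` S. \<rho> x = p}"
  by (auto simp: zeta_def xi_def)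

lemma zeta_Some_Some_mono:
  "S \<subseteq> T \<Longrightarrow> zeta \<sigma> \<rho> S (Some i) (Some p) \<subseteq> zeta \<sigma> \<rho> T (Some i) (Some p)"
  by (auto simp: zeta_Some_Some)

lemma card_eq_1_subset:
  assumes "finite B" "card B = 1" "A \<subseteq> B" "A \<noteq> {}"
  shows "card A = 1"
  using assms by (metis card_1_singletonE subset_singletonD)

lemma P_antimono:
  assumes "finite T" "S \<subseteq> T" "S \<noteq> {}" "P l n \<sigma> \<rho> k T"
  shows "P l n \<sigma> \<rho> k S"
  using assms
proof (induction k arbitrary: S T)
  case 0
  then show ?case using card_eq_1_subset by auto
next
  case (Suc k)
  show ?case
  proof (cases "card T = 1")
    case True
    then show ?thesis using Suc.prems card_eq_1_subset by auto
  next
    case False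
    then obtain i where i: "i \<in> bvecs l" "card (\<sigma> i ` T) = card T"
      and next_T: "\<forall>p\<in>bvecs n. zeta \<sigma> \<rho> T (Some i) (Some p) \<noteq> {} \<longrightarrow>
                      P l n \<sigma> \<rho> k (zeta \<sigma> \<rho> T (Some i) (Some p))"
      using Suc.prems(4) by (auto simp: zeta_Some_None)
    have "inj_on (\<sigma> i) T"
      using i(2) Suc.prems(1) by (simp add: inj_on_iff_eq_card)
    then have card_S: "card (\<sigma> i ` S) = card S"
      using Suc.prems(2) by (meson card_image inj_on_subset)
    have "P l n \<sigma> \<rho> k (zeta \<sigma> \<rho> S (Some i) (Some p))"
      if p: "p \<in> bvecs n" "zeta \<sigma> \<rho> S (Some i) (Some p) \<noteq> {}" for p
    proof (rule Suc.IH)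
      show sub: "zeta \<sigma> \<rho> S (Some i) (Some p) \<subseteq> zeta \<sigma> \<rho> T (Some i) (Some p)"
        using Suc.prems(2) by (rule zeta_Some_Some_mono)
      show "finite (zeta \<sigma> \<rho> T (Some i) (Some p))"
        using Suc.prems(1) by (simp add: zeta_Some_Some)
      show "P l n \<sigma> \<rho> k (zeta \<sigma> \<rho> T (Some i) (Some p))"
        using next_T p sub by blast
    qed (use p in simp)
    then show ?thesis
      using i(1) card_S by (auto simp: zeta_Some_None intro!: bexI[of _ i])
  qed
qed

lemma Gamma_neq_infinity_iff: "Gamma l n \<sigma> \<rho> S \<noteq> \<infinity> \<longleftrightarrow> (\<exists>k. P l n \<sigma> \<rho> k S)"
  by (simp add: Gamma_def)

theorem lemma4:
  fixes l m n :: nat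
    and \<sigma> :: "bool list \<Rightarrow> bool list \<Rightarrow> bool list"
    and \<rho> :: "bool list \<Rightarrow> bool list"
    and S1 S2 :: "bool list set"
  assumes "bcn l m n \<sigma> \<rho>"
    and "S1 \<noteq> {}" and "S2 \<noteq> {}"
    and "S1 \<subseteq> bvecs m" and "S2 \<subseteq> bvecs m"
    and "S1 \<subseteq> S2"
    and "Gamma l n \<sigma> \<rho> S2 \<noteq> \<infinity>"
  shows "Gamma l n \<sigma> \<rho> S1 \<noteq> \<infinity>"
proof -
  have "finite S2"
    using assms(5) finite_bvecs finite_subset by blast
  moreover obtain k where "P l n \<sigma> \<rho> k S2"
    using assms(7) Gamma_neq_infinity_iff by blast
  ultimately have "P l n \<sigma> \<rho> k S1"
    using P_antimono assms(2,6) by blast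
  then show ?thesis
    using Gamma_neq_infinity_iff by blast
qed

end
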